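(* Let $\{(x_i,w_i)\}_{i=1}^n$ be a set of strategies with proportions $x_i$ and fitnesses $w_i$, and let $\{(Y_j,W_j,c_j)\}_{j=1}^m$ be a set of compound strategies that factors $\{(x_i,w_i)\}_{i=1}^n$. Then the replicator system \[ \dot{x}_i = x_i(w_i - \langle w \rangle), \qquad \langle w \rangle = \sum_{k=1}^n x_k w_k, \] and the nested system \[ \dot{Y}_j = Y_j(W_j - \langle W \rangle), \qquad \dot{y}_{ij} = y_{ij}(w_i - \langle w \rangle_j), \] where $\langle W \rangle = \sum_{k=1}^m Y_k W_k$ and $\langle w \rangle_j = \sum_{k=1}^n y_{kj} w_k$, describe the same dynamics.
   Context: A compound strategy $(Y_j,W_j,c_j)$ of a set of strategies $\{(x_i,w_i)\}_{i=1}^n$ is defined by: a component function $c_j$ with $\sum_{i=1}^n c_j(i) = 1$; a weight $Y_j := \sum_{i=1}^n c_j(i) x_i$; a profile $y_{ij} = \frac{c_j(i) x_i}{Y_j}$; and a fitness $W_j = \sum_{i=1}^n y_{ij} w_i$. A set of compound strategies $\{(Y_j,W_j,c_j)\}_{j=1}^m$ factors a set of strategies $\{(x_i,w_i)\}_{i=1}^n$, with $x_i = \sum_{j: c_j(i)\neq 0} \frac{y_{ij} Y_j}{c_j(i)}$, if for all $1 \le i \le n$, $\sum_{j=1}^m c_j(i) = 1$. *)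

theory Defs
  imports Complex_Main
begin

text \<open>A component-function family is c :: nat => nat => real, with c j i = c_j(i).\<close>

definition compound_weight :: "(nat \<Rightarrow> nat \<Rightarrow> real) \<Rightarrow> nat \<Rightarrow> (nat \<Rightarrow> real) \<Rightarrow> nat \<Rightarrow> real" where
  "compound_weight c n x j = (\<Sum>i=1..n. c j i * x i)"

definition profile :: "(nat \<Rightarrow> nat \<Rightarrow> real) \<Rightarrow> nat \<Rightarrow> (nat \<Rightarrow> real) \<Rightarrow> nat \<Rightarrow> nat \<Rightarrow> real" where
  "profile c n x i j = c j i * x i / compound_weight c n x j"

definition compound_fitness :: "(nat \<Rightarrow> nat \<Rightarrow> real) \<Rightarrow> nat \<Rightarrow> (nat \<Rightarrow> real) \<Rightarrow> (nat \<Rightarrow> real) \<Rightarrow> nat \<Rightarrow> real" where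
  "compound_fitness c n x w j = (\<Sum>i=1..n. profile c n x i j * w i)"

definition factors :: "(nat \<Rightarrow> nat \<Rightarrow> real) \<Rightarrow> nat \<Rightarrow> nat \<Rightarrow> bool" where
  "factors c n m \<longleftrightarrow> (\<forall>j\<in>{1..m}. (\<Sum>i=1..n. c j i) = 1) \<and> (\<forall>i\<in>{1..n}. (\<Sum>j=1..m. c j i) = 1)"

text \<open>Trajectories: x t i is the proportion of strategy i at time t, w t i its fitness
  at time t (w may depend on the state through t arbitrarily). I is the time domain.\<close>

definition replicator_system :: "nat \<Rightarrow> real set \<Rightarrow> (real \<Rightarrow> nat \<Rightarrow> real) \<Rightarrow> (real \<Rightarrow> nat \<Rightarrow> real) \<Rightarrow> bool" where
  "replicator_system n I x w \<longleftrightarrow>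
     (\<forall>t\<in>I. \<forall>i\<in>{1..n}.
        ((\<lambda>s. x s i) has_real_derivative
           x t i * (w t i - (\<Sum>k=1..n. x t k * w t k))) (at t within I))"

text \<open>The nested system for Y_j(t) = compound weight, y_ij(t) = profile of x(t).\<close>
definition nested_system :: "(nat \<Rightarrow> nat \<Rightarrow> real) \<Rightarrow> nat \<Rightarrow> nat \<Rightarrow> real set \<Rightarrow> (real \<Rightarrow> nat \<Rightarrow> real) \<Rightarrow> (real \<Rightarrow> nat \<Rightarrow> real) \<Rightarrow> bool" where
  "nested_system c n m I x w \<longleftrightarrow>
     (\<forall>t\<in>I.
       (\<forall>j\<in>{1..m}.
          ((\<lambda>s. compound_weight c n (x s) j) has_real_derivative
             compound_weight c n (x t) j *
               (compound_fitness c n (x t) (w t) j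
                 - (\<Sum>k=1..m. compound_weight c n (x t) k * compound_fitness c n (x t) (w t) k)))
           (at t within I)) \<and>
       (\<forall>i\<in>{1..n}. \<forall>j\<in>{1..m}.
          ((\<lambda>s. profile c n (x s) i j) has_real_derivative
             profile c n (x t) i j *
               (w t i - (\<Sum>k=1..n. profile c n (x t) k j * w t k)))
           (at t within I)))"

end

theory Submission
  imports Defs
begin

text \<open>Since \<open>Y\<^sub>j W\<^sub>j = \<Sum>\<^sub>i c\<^sub>j(i) x\<^sub>i w\<^sub>i\<close> and the \<open>c\<^sub>j(i)\<close> sum to one over \<open>j\<close>,
  the mean fitnesses agree, \<open>\<langle>W\<rangle> = \<langle>w\<rangle>\<close>, and \<open>x\<^sub>i = \<Sum>\<^sub>j y\<^sub>i\<^sub>j Y\<^sub>j\<close>.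
  Under the replicator dynamics each \<open>Y\<^sub>j\<close> is a linear combination of the \<open>x\<^sub>i\<close>, so it
  follows a replicator equation itself, and the quotient rule gives the equation for
  \<open>y\<^sub>i\<^sub>j = c\<^sub>j(i) x\<^sub>i / Y\<^sub>j\<close>, in which the global mean cancels. Conversely, the
  product rule applied to \<open>x\<^sub>i = \<Sum>\<^sub>j y\<^sub>i\<^sub>j Y\<^sub>j\<close> recovers the replicator equation.
  Only the condition \<open>\<Sum>\<^sub>j c\<^sub>j(i) = 1\<close> of \<open>factors\<close> is needed.\<close>

lemma compound_weight_mult_fitness:
  assumes "compound_weight c n x j \<noteq> 0"
  shows "compound_weight c n x j * compound_fitness c n x w j = (\<Sum>i=1..n. c j i * x i * w i)"
  using assms unfolding compound_fitness_def profile_def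
  by (simp add: sum_distrib_left)

lemma mean_compound_fitness_eq:
  assumes cover: "\<And>i. i \<in> {1..n} \<Longrightarrow> (\<Sum>j=1..m. c j i) = 1"
    and nonzero: "\<And>j. j \<in> {1..m} \<Longrightarrow> compound_weight c n x j \<noteq> 0"
  shows "(\<Sum>j=1..m. compound_weight c n x j * compound_fitness c n x w j) = (\<Sum>i=1..n. x i * w i)"
proof -
  have "(\<Sum>j=1..m. compound_weight c n x j * compound_fitness c n x w j)
      = (\<Sum>j=1..m. \<Sum>i=1..n. c j i * x i * w i)"
    using nonzero compound_weight_mult_fitness by (intro sum.cong) auto
  also have "\<dots> = (\<Sum>i=1..n. (\<Sum>j=1..m. c j i) * (x i * w i))"
    by (subst sum.swap) (simp add: sum_distrib_right mult.assoc)
  also have "\<dots> = (\<Sum>i=1..n. x i * w i)"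
    using cover by (intro sum.cong) auto
  finally show ?thesis .
qed

lemma sum_profile_mult_compound_weight:
  assumes cover: "(\<Sum>j=1..m. c j i) = 1"
    and nonzero: "\<And>j. j \<in> {1..m} \<Longrightarrow> compound_weight c n x j \<noteq> 0"
  shows "(\<Sum>j=1..m. profile c n x i j * compound_weight c n x j) = x i"
proof -
  have "(\<Sum>j=1..m. profile c n x i j * compound_weight c n x j) = (\<Sum>j=1..m. c j i) * x i"
    using nonzero unfolding profile_def sum_distrib_right by (intro sum.cong) auto
  with cover show ?thesis by simp
qed

lemma compound_weight_replicator_rate:
  assumes "compound_weight c n x j \<noteq> 0"
  shows "(\<Sum>i=1..n. c j i * (x i * (w i - a)))
       = compound_weight c n x j * (compound_fitness c n x w j - a)"
proof -
  have "(\<Sum>i=1..n. c j i * (x i * (w i - a)))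
      = (\<Sum>i=1..n. c j i * x i * w i) - compound_weight c n x j * a"
    unfolding compound_weight_def sum_distrib_right sum_subtractf[symmetric]
    by (intro sum.cong) (auto simp: algebra_simps)
  with compound_weight_mult_fitness[OF assms] show ?thesis
    by (simp add: right_diff_distrib)
qed

lemma has_real_derivative_compound_weight:
  assumes "\<And>i. i \<in> {1..n} \<Longrightarrow> ((\<lambda>s. x s i) has_real_derivative x' i) (at t within S)"
  shows "((\<lambda>s. compound_weight c n (x s) j) has_real_derivative (\<Sum>i=1..n. c j i * x' i))
           (at t within S)"
  unfolding compound_weight_def by (intro DERIV_sum DERIV_cmult assms) simp

lemma compound_weight_has_replicator_derivative:
  assumes "\<And>i. i \<in> {1..n} \<Longrightarrow>
      ((\<lambda>s. x s i) has_real_derivative x t i * (w i - a)) (at t within S)"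
    and "compound_weight c n (x t) j \<noteq> 0"
  shows "((\<lambda>s. compound_weight c n (x s) j) has_real_derivative
           compound_weight c n (x t) j * (compound_fitness c n (x t) w j - a)) (at t within S)"
  using has_real_derivative_compound_weight[of n x "\<lambda>i. x t i * (w i - a)" t S c j, OF assms(1)]
  unfolding compound_weight_replicator_rate[OF assms(2)] .

lemma profile_has_replicator_derivative:
  assumes dx: "\<And>i. i \<in> {1..n} \<Longrightarrow>
      ((\<lambda>s. x s i) has_real_derivative x t i * (w i - a)) (at t within S)"
    and i: "i \<in> {1..n}"
    and nonzero: "compound_weight c n (x t) j \<noteq> 0"
  shows "((\<lambda>s. profile c n (x s) i j) has_real_derivative
           profile c n (x t) i j * (w i - compound_fitness c n (x t) w j)) (at t within S)"
proof -
  define Y where "Y = compound_weight c n (x t) j"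
  define W where "W = compound_fitness c n (x t) w j"
  have "((\<lambda>s. profile c n (x s) i j) has_real_derivative
          (c j i * (x t i * (w i - a)) * Y - c j i * x t i * (Y * (W - a))) / (Y * Y))
        (at t within S)"
    unfolding profile_def Y_def W_def
    using DERIV_divide[OF DERIV_cmult[OF dx[OF i]]
        compound_weight_has_replicator_derivative[OF dx nonzero], of "c j i"] nonzero
    by simp
  also have "(c j i * (x t i * (w i - a)) * Y - c j i * x t i * (Y * (W - a))) / (Y * Y)
      = profile c n (x t) i j * (w i - W)"
    using nonzero unfolding profile_def Y_def[symmetric] by (simp add: field_simps)
  finally show ?thesis unfolding W_def .
qed

lemma replicator_imp_nested_system:
  assumes cover: "\<And>i. i \<in> {1..n} \<Longrightarrow> (\<Sum>j=1..m. c j i) = 1"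
    and nonzero: "\<And>t j. t \<in> I \<Longrightarrow> j \<in> {1..m} \<Longrightarrow> compound_weight c n (x t) j \<noteq> 0"
    and "replicator_system n I x w"
  shows "nested_system c n m I x w"
  unfolding nested_system_def
proof (intro ballI conjI)
  fix t assume t: "t \<in> I"
  have dx: "((\<lambda>s. x s i) has_real_derivative x t i * (w t i - (\<Sum>k=1..n. x t k * w t k)))
      (at t within I)" if "i \<in> {1..n}" for i
    using assms(3) t that unfolding replicator_system_def by blast
  have mean: "(\<Sum>k=1..m. compound_weight c n (x t) k * compound_fitness c n (x t) (w t) k)
      = (\<Sum>k=1..n. x t k * w t k)"
    using mean_compound_fitness_eq[OF cover nonzero[OF t]] .
  show "((\<lambda>s. compound_weight c n (x s) j) has_real_derivative
          compound_weight c n (x t) j *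
            (compound_fitness c n (x t) (w t) j
              - (\<Sum>k=1..m. compound_weight c n (x t) k * compound_fitness c n (x t) (w t) k)))
        (at t within I)" if "j \<in> {1..m}" for j
    unfolding mean by (rule compound_weight_has_replicator_derivative[OF dx nonzero[OF t that]])
  show "((\<lambda>s. profile c n (x s) i j) has_real_derivative
          profile c n (x t) i j * (w t i - (\<Sum>k=1..n. profile c n (x t) k j * w t k)))
        (at t within I)" if "i \<in> {1..n}" "j \<in> {1..m}" for i j
    using profile_has_replicator_derivative[OF dx that(1) nonzero[OF t that(2)]]
    unfolding compound_fitness_def .
qed

lemma nested_imp_replicator_system:
  assumes cover: "\<And>i. i \<in> {1..n} \<Longrightarrow> (\<Sum>j=1..m. c j i) = 1"
    and nonzero: "\<And>t j. t \<in> I \<Longrightarrow> j \<in> {1..m} \<Longrightarrow> compound_weight c n (x t) j \<noteq> 0"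
    and "nested_system c n m I x w"
  shows "replicator_system n I x w"
  unfolding replicator_system_def
proof (intro ballI)
  fix t i assume t: "t \<in> I" and i: "i \<in> {1..n}"
  define a where "a = (\<Sum>k=1..n. x t k * w t k)"
  define Y where "Y j = compound_weight c n (x t) j" for j
  define W where "W j = compound_fitness c n (x t) (w t) j" for j
  define y where "y j = profile c n (x t) i j" for j
  have mean: "(\<Sum>k=1..m. compound_weight c n (x t) k * compound_fitness c n (x t) (w t) k) = a"
    unfolding a_def using mean_compound_fitness_eq[OF cover nonzero[OF t]] .
  have dY: "((\<lambda>s. compound_weight c n (x s) j) has_real_derivative Y j * (W j - a)) (at t within I)"
    if "j \<in> {1..m}" for j
    using assms(3) t that mean unfolding nested_system_def Y_def W_def by auto
  have dy: "((\<lambda>s. profile c n (x s) i j) has_real_derivative y j * (w t i - W j)) (at t within I)"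
    if "j \<in> {1..m}" for j
    using assms(3) t that i unfolding nested_system_def y_def W_def compound_fitness_def by auto
  have "((\<lambda>s. \<Sum>j=1..m. profile c n (x s) i j * compound_weight c n (x s) j) has_real_derivative
      (\<Sum>j=1..m. y j * (w t i - W j) * Y j + Y j * (W j - a) * y j)) (at t within I)"
    using dy dY unfolding y_def Y_def by (intro DERIV_sum DERIV_mult) auto
  also have "(\<Sum>j=1..m. y j * (w t i - W j) * Y j + Y j * (W j - a) * y j)
      = (\<Sum>j=1..m. y j * Y j) * (w t i - a)"
    unfolding sum_distrib_right by (intro sum.cong) (auto simp: algebra_simps)
  also have "(\<Sum>j=1..m. y j * Y j) = x t i"
    unfolding y_def Y_def using sum_profile_mult_compound_weight[OF cover[OF i] nonzero[OF t]] .
  finally have "((\<lambda>s. \<Sum>j=1..m. profile c n (x s) i j * compound_weight c n (x s) j)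
      has_real_derivative x t i * (w t i - a)) (at t within I)" .
  then show "((\<lambda>s. x s i) has_real_derivative x t i * (w t i - (\<Sum>k=1..n. x t k * w t k)))
      (at t within I)"
    unfolding a_def
  proof (rule has_field_derivative_transform_within[OF _ zero_less_one t])
    fix s assume "s \<in> I"
    then show "(\<Sum>j=1..m. profile c n (x s) i j * compound_weight c n (x s) j) = x s i"
      using sum_profile_mult_compound_weight[OF cover[OF i] nonzero] by blast
  qed
qed

theorem mainTheorem1:
  fixes c :: "nat \<Rightarrow> nat \<Rightarrow> real" and n m :: nat and I :: "real set"
    and x w :: "real \<Rightarrow> nat \<Rightarrow> real"
  assumes "factors c n m"
    and "\<forall>t\<in>I. \<forall>j\<in>{1..m}. compound_weight c n (x t) j \<noteq> 0"
  shows "replicator_system n I x w \<longleftrightarrow> nested_system c n m I x w"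
proof -
  have cover: "\<And>i. i \<in> {1..n} \<Longrightarrow> (\<Sum>j=1..m. c j i) = 1"
    using assms(1) unfolding factors_def by blast
  have nonzero: "\<And>t j. t \<in> I \<Longrightarrow> j \<in> {1..m} \<Longrightarrow> compound_weight c n (x t) j \<noteq> 0"
    using assms(2) by blast
  show ?thesis
    using replicator_imp_nested_system[OF cover nonzero] nested_imp_replicator_system[OF cover nonzero]
    by (rule iffI)
qed

end
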